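(* Let $\pi_0\in(0,1)$ and let $\psi:[0,1]\to\mathbb{R}$ be non-decreasing with $\psi(0)<\psi(1)$. For $\sigma\in(0,0.25]$ define $$\pi_1(1)=\frac{(1+4\sigma)\pi_0}{1+4\sigma\pi_0},\qquad \pi_1(0)=\frac{(1-4\sigma)\pi_0}{1-4\sigma\pi_0},$$ $$\Psi(\sigma,\pi_0)=(0.5+2\sigma\pi_0)\,\psi(\pi_1(1))+(0.5-2\sigma\pi_0)\,\psi(\pi_1(0)),$$ and $\Delta\Phi(\sigma,\pi_0)=2\sigma\pi_0+\Psi(\sigma,\pi_0)-\psi(\pi_0)$. If $\psi$ is linear or convex, then $\Delta\Phi(\sigma,\pi_0)$ is increasing in $\sigma$.
   Context: Interpretation: $\Delta\Phi(\sigma,\pi_0)$ is the gain in the expert's expected payoff (accuracy plus reputation $\psi$ of the posterior belief about his competence) from choosing a complex rule over a simple rule, where the complex rule yields the correct action with probability $0.5+2\sigma$ if the expert is competent and $0.5$ otherwise, the simple rule yields it with probability $0.5$ and reveals nothing, $\pi_0$ is the prior that the expert is competent, and $\pi_1(Y)$ is the posterior after the complex rule leads to the correct ($Y=1$) or incorrect ($Y=0$) action. *)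

theory Defs
  imports "HOL-Analysis.Analysis"
begin

definition post1 :: "real \<Rightarrow> real \<Rightarrow> real" where
  "post1 \<sigma> \<pi>0 = ((1 + 4*\<sigma>) * \<pi>0) / (1 + 4*\<sigma>*\<pi>0)"

definition post0 :: "real \<Rightarrow> real \<Rightarrow> real" where
  "post0 \<sigma> \<pi>0 = ((1 - 4*\<sigma>) * \<pi>0) / (1 - 4*\<sigma>*\<pi>0)"

definition Psi :: "(real \<Rightarrow> real) \<Rightarrow> real \<Rightarrow> real \<Rightarrow> real" where
  "Psi \<psi> \<sigma> \<pi>0 = (1/2 + 2*\<sigma>*\<pi>0) * \<psi> (post1 \<sigma> \<pi>0) + (1/2 - 2*\<sigma>*\<pi>0) * \<psi> (post0 \<sigma> \<pi>0)"

definition DeltaPhi :: "(real \<Rightarrow> real) \<Rightarrow> real \<Rightarrow> real \<Rightarrow> real" where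
  "DeltaPhi \<psi> \<sigma> \<pi>0 = 2*\<sigma>*\<pi>0 + Psi \<psi> \<sigma> \<pi>0 - \<psi> \<pi>0"

end

theory Submission
  imports Defs
begin

text \<open>The complex rule reveals a signal whose posteriors \<open>post1 \<sigma> \<pi>0\<close> and \<open>post0 \<sigma> \<pi>0\<close>
  average back to the prior, and raising \<open>\<sigma>\<close> pushes them further apart: the posterior
  distribution at a larger \<open>\<sigma>\<close> is a mean-preserving spread of the one at a smaller \<open>\<sigma>\<close>.
  Hence for convex (in particular affine) \<open>\<psi>\<close> the expected reputation \<open>Psi\<close> is
  non-decreasing in \<open>\<sigma>\<close>, while the accuracy gain \<open>2\<sigma>\<pi>0\<close> is strictly increasing.\<close>

lemma convex_on_affine:
  fixes f :: "real \<Rightarrow> real"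
  assumes "convex S" and "\<And>x. x \<in> S \<Longrightarrow> f x = a + b * x"
  shows "convex_on S f"
  unfolding convex_on_def
proof (intro conjI ballI allI impI)
  fix x y u v :: real
  assume "x \<in> S" "y \<in> S" "0 \<le> u" "0 \<le> v" "u + v = 1"
  moreover from this have "u *\<^sub>R x + v *\<^sub>R y \<in> S"
    using \<open>convex S\<close> by (simp add: convex_def)
  moreover have "a = u * a + v * a"
    using \<open>u + v = 1\<close> by (metis distrib_right mult_1)
  ultimately show "f (u *\<^sub>R x + v *\<^sub>R y) \<le> u * f x + v * f y"
    using assms(2) by (simp add: algebra_simps)
qed (fact \<open>convex S\<close>)

lemma convex_on_two_point_le_endpoints:
  fixes f :: "real \<Rightarrow> real"
  assumes "convex_on {a..b} f" "z0 \<in> {a..b}" "z1 \<in> {a..b}" "0 \<le> q" "q \<le> 1"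
    and "q * z1 + (1 - q) * z0 = p * b + (1 - p) * a"
  shows "q * f z1 + (1 - q) * f z0 \<le> p * f b + (1 - p) * f a"
proof -
  define k where "k = (f b - f a) / (b - a)"
  have chord: "f z \<le> k * (z - a) + f a" if "z \<in> {a..b}" for z
    unfolding k_def using convex_onD_Icc'[OF assms(1) that] by simp
  have slope: "k * (b - a) = f b - f a"
    unfolding k_def by (cases "a = b") simp_all
  have "q * f z1 + (1 - q) * f z0 \<le> q * (k * (z1 - a) + f a) + (1 - q) * (k * (z0 - a) + f a)"
    using chord assms(2-5) by (intro add_mono mult_left_mono) auto
  also have "\<dots> = k * (q * z1 + (1 - q) * z0 - a) + f a"
    by (simp add: algebra_simps)
  also have "\<dots> = p * (k * (b - a)) + f a"
    unfolding assms(6) by (simp add: algebra_simps)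
  also have "\<dots> = p * f b + (1 - p) * f a"
    unfolding slope by (simp add: algebra_simps)
  finally show ?thesis .
qed

lemma post1_zero [simp]: "post1 0 \<pi>0 = \<pi>0"
  by (simp add: post1_def)

lemma post0_zero [simp]: "post0 0 \<pi>0 = \<pi>0"
  by (simp add: post0_def)

lemma post1_mono:
  assumes "0 \<le> \<pi>0" "\<pi>0 \<le> 1" "0 \<le> s" "s \<le> t"
  shows "post1 s \<pi>0 \<le> post1 t \<pi>0"
proof -
  have "0 \<le> (t - s) * \<pi>0 * (1 - \<pi>0)" "0 \<le> s * \<pi>0" "0 \<le> t * \<pi>0"
    using assms by simp_all
  then show ?thesis
    unfolding post1_def by (simp add: divide_simps algebra_simps)
qed

lemma post0_antimono:
  assumes "0 \<le> \<pi>0" "\<pi>0 \<le> 1" "0 \<le> s" "s \<le> t" "4 * t * \<pi>0 < 1"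
  shows "post0 t \<pi>0 \<le> post0 s \<pi>0"
proof -
  have "0 \<le> (t - s) * \<pi>0 * (1 - \<pi>0)" "s * \<pi>0 \<le> t * \<pi>0"
    using assms by (simp_all add: mult_right_mono)
  with assms(5) show ?thesis
    unfolding post0_def by (simp add: divide_simps algebra_simps)
qed

lemma post1_le_one:
  assumes "0 \<le> \<sigma>" "0 \<le> \<pi>0" "\<pi>0 \<le> 1"
  shows "post1 \<sigma> \<pi>0 \<le> 1"
proof -
  have "0 \<le> \<sigma> * \<pi>0"
    using assms by simp
  with assms(3) show ?thesis
    unfolding post1_def by (simp add: divide_simps algebra_simps)
qed

lemma post0_nonneg:
  assumes "\<sigma> \<le> 1/4" "0 \<le> \<pi>0" "4 * \<sigma> * \<pi>0 < 1"
  shows "0 \<le> post0 \<sigma> \<pi>0"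
  unfolding post0_def using assms by simp

lemma posterior_mean:
  assumes "4 * \<sigma> * \<pi>0 \<noteq> 1" "4 * \<sigma> * \<pi>0 \<noteq> -1"
  shows "(1/2 + 2*\<sigma>*\<pi>0) * post1 \<sigma> \<pi>0 + (1 - (1/2 + 2*\<sigma>*\<pi>0)) * post0 \<sigma> \<pi>0 = \<pi>0"
proof -
  have "(1/2 + 2*\<sigma>*\<pi>0) * post1 \<sigma> \<pi>0 = (1 + 4*\<sigma>) * \<pi>0 / 2"
    unfolding post1_def using assms(2) by (simp add: field_simps)
  moreover have "(1 - (1/2 + 2*\<sigma>*\<pi>0)) * post0 \<sigma> \<pi>0 = (1 - 4*\<sigma>) * \<pi>0 / 2"
    unfolding post0_def using assms(1) by (simp add: field_simps)
  ultimately show ?thesis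
    by (simp add: field_simps)
qed

lemma Psi_mono:
  assumes "convex_on {0..1} \<psi>" "0 \<le> \<pi>0" "\<pi>0 < 1" "0 \<le> s" "s \<le> t" "t \<le> 1/4"
  shows "Psi \<psi> s \<pi>0 \<le> Psi \<psi> t \<pi>0"
proof -
  have "0 \<le> s * \<pi>0" "s * \<pi>0 \<le> t * \<pi>0" "4 * t * \<pi>0 \<le> \<pi>0"
    using assms mult_right_mono[of s t \<pi>0] mult_right_mono[of "4 * t" 1 \<pi>0] by simp_all
  then have small: "0 \<le> 4 * s * \<pi>0" "4 * s * \<pi>0 < 1" "0 \<le> 4 * t * \<pi>0" "4 * t * \<pi>0 < 1"
    using assms by linarith+
  have spread: "post0 t \<pi>0 \<le> post0 s \<pi>0" "post0 s \<pi>0 \<le> post1 s \<pi>0" "post1 s \<pi>0 \<le> post1 t \<pi>0"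
    using post0_antimono[of \<pi>0 s t] post0_antimono[of \<pi>0 0 s] post1_mono[of \<pi>0 0 s]
      post1_mono[of \<pi>0 s t] assms small by simp_all
  have convex_t: "convex_on {post0 t \<pi>0..post1 t \<pi>0} \<psi>"
    using assms small post0_nonneg[of t \<pi>0] post1_le_one[of t \<pi>0]
    by (intro convex_on_subset[OF assms(1)]) auto
  have mean: "(1/2 + 2 * \<sigma> * \<pi>0) * post1 \<sigma> \<pi>0 + (1 - (1/2 + 2 * \<sigma> * \<pi>0)) * post0 \<sigma> \<pi>0 = \<pi>0"
    if "0 \<le> 4 * \<sigma> * \<pi>0" "4 * \<sigma> * \<pi>0 < 1" for \<sigma>
    using that by (intro posterior_mean) linarith+
  have same_mean: "(1/2 + 2 * s * \<pi>0) * post1 s \<pi>0 + (1 - (1/2 + 2 * s * \<pi>0)) * post0 s \<pi>0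
      = (1/2 + 2 * t * \<pi>0) * post1 t \<pi>0 + (1 - (1/2 + 2 * t * \<pi>0)) * post0 t \<pi>0"
    using mean[OF small(1,2)] mean[OF small(3,4)] by (rule trans[OF _ sym])
  have inside: "post0 s \<pi>0 \<in> {post0 t \<pi>0..post1 t \<pi>0}" "post1 s \<pi>0 \<in> {post0 t \<pi>0..post1 t \<pi>0}"
    using spread by simp_all
  have weight: "0 \<le> 1/2 + 2 * s * \<pi>0" "1/2 + 2 * s * \<pi>0 \<le> 1"
    using small by linarith+
  note convex_on_two_point_le_endpoints[OF convex_t inside weight same_mean]
  then show ?thesis
    unfolding Psi_def by simp
qed

theorem proposition2:
  fixes \<psi> :: "real \<Rightarrow> real" and \<pi>0 :: real
  assumes "0 < \<pi>0" and "\<pi>0 < 1"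
    and "mono_on {0..1} \<psi>" and "\<psi> 0 < \<psi> 1"
    and "(\<exists>a b. \<forall>x\<in>{0..1}. \<psi> x = a + b * x) \<or> convex_on {0..1} \<psi>"
  shows "strict_mono_on {0<..1/4} (\<lambda>\<sigma>. DeltaPhi \<psi> \<sigma> \<pi>0)"
proof -
  have convex: "convex_on {0..1} \<psi>"
    using assms(5) by (auto intro: convex_on_affine)
  show ?thesis
  proof (rule strict_mono_onI)
    fix s t :: real
    assume "s \<in> {0<..1/4}" "t \<in> {0<..1/4}" "s < t"
    then have "Psi \<psi> s \<pi>0 \<le> Psi \<psi> t \<pi>0" and "2 * s * \<pi>0 < 2 * t * \<pi>0"
      using Psi_mono[OF convex] assms(1,2) by simp_all
    then show "DeltaPhi \<psi> s \<pi>0 < DeltaPhi \<psi> t \<pi>0"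
      unfolding DeltaPhi_def by simp
  qed
qed

end
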